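(* Let $p$ be an odd prime and $\alpha$ an indeterminate over $\mathbb F_p$. The coefficients of the polynomial \[ G^{(\alpha)}(X)=-\sum_{k=1}^{p-1}\frac{1}{k}\,\frac{X^{k}}{\prod_{s=1}^{k-1}b_{1,s}(\alpha)}\in\mathbb F_p(\alpha)[X] \] (empty product equal to $1$) belong to the subring $\mathbb F_p[\alpha,(\alpha^{p-1}-1)^{-1}]$ of $\mathbb F_p(\alpha)$.
   Context: $\mathbb F_p$ is the field of $p$ elements, $\binom{x}{m}=x(x-1)\cdots(x-m+1)/m!$. For integers $0<r,s<p$ (interpreted as elements of $\mathbb F_p$), $b_{r,s}(\alpha)=\sum_{k=0}^{p-1}(-r/s)^k\binom{r\alpha-1}{p-1-k}\binom{s\alpha-1}{k}\in\mathbb F_p[\alpha]$. *)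

theory Defs
  imports "HOL-Computational_Algebra.Polynomial" "HOL-Computational_Algebra.Fraction_Field"
begin

text \<open>Binomial polynomial binom(x,m) = x(x-1)...(x-m+1)/m!, for x a polynomial over a field
  (used only for m < p = char, so m! is invertible).\<close>
definition pbinom :: "'a::field poly \<Rightarrow> nat \<Rightarrow> 'a poly" where
  "pbinom x m = smult (inverse (of_nat (fact m))) (\<Prod>i<m. x - of_nat i)"

definition alpha :: "'a::field poly" where
  "alpha = [:0, 1:]"

definition bpoly :: "nat \<Rightarrow> nat \<Rightarrow> nat \<Rightarrow> 'a::field poly" where
  "bpoly p r s = (\<Sum>k = 0..p-1.
      smult ((- (of_nat r / of_nat s)) ^ k)
        (pbinom (smult (of_nat r) alpha - 1) (p - 1 - k) * pbinom (smult (of_nat s) alpha - 1) k))"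

definition emb :: "'a::field poly \<Rightarrow> 'a poly fract" where
  "emb f = Fract f 1"

definition Gpoly :: "nat \<Rightarrow> ('a::field poly fract) poly" where
  "Gpoly p = - (\<Sum>k = 1..p-1.
      monom (inverse (of_nat k) / (\<Prod>s = 1..k-1. emb (bpoly p 1 s))) k)"

definition loc_ring :: "nat \<Rightarrow> ('a::field poly fract) set" where
  "loc_ring p = {Fract f ((alpha ^ (p - 1) - 1) ^ n) | f n. True}"

end

(*
  Write b_s for b_{1,s}. Up to sign and the unit 1/k, the k-th coefficient of G is the inverse of
  b_1 \<cdots> b_{k-1}, so it suffices that every nonzero b_s divides alpha^{p-1} - 1.

  By its definition, b_s is the coefficient of X^{p-1} in the product of the truncated
  binomial series of (1 + X)^{alpha-1} and (1 - X/s)^{s alpha-1}. That product satisfies a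
  first-order differential equation whose coefficient recurrence raises the degree in alpha by at
  most one every two steps, because (alpha - 1) - (s alpha - 1)/s is constant; hence
  deg b_s \<le> (p-1)/2. On the other hand, b_s vanishes at alpha = j whenever j + (s j mod p) \<le> p,
  since every term then contains a binomial coefficient binom(j - 1, m) or binom((s j mod p) - 1, k)
  with too large lower index, and the involution j \<mapsto> p - j shows that there are at least
  (p-1)/2 such j in {1..p-1}. So b_s has at least deg b_s distinct roots, all of them roots of
  alpha^{p-1} - 1, and therefore divides it.
*)
theory Submission
  imports Defs "HOL-Computational_Algebra.Formal_Power_Series" "HOL-Number_Theory.Cong"
begin

lemma of_nat_card_UNIV_eq_0:
  assumes "finite (UNIV :: 'a::ring_1 set)"
  shows "of_nat (card (UNIV :: 'a set)) = (0::'a)"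
proof -
  have "(\<Sum>x\<in>(UNIV::'a set). x + 1) = (\<Sum>x\<in>UNIV. x)"
    by (rule sum.reindex_bij_witness[of _ "\<lambda>x. x - 1" "\<lambda>x. x + 1"]) auto
  then show ?thesis
    by (simp add: sum.distrib)
qed

lemma CHAR_eq_card_if_prime:
  assumes "card (UNIV :: 'a::field set) = p" "prime p"
  shows "CHAR('a) = p"
proof -
  have "finite (UNIV :: 'a set)"
    using assms by (metis card.infinite not_prime_0)
  then have "CHAR('a) dvd p"
    using assms(1) of_nat_card_UNIV_eq_0 of_nat_eq_0_iff_char_dvd by metis
  moreover have "CHAR('a) \<noteq> 1"
    by (metis of_nat_1 of_nat_CHAR one_neq_zero)
  ultimately show ?thesis using assms(2) by (auto simp: prime_nat_iff)
qed

lemma power_card_minus_one_eq_1: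
  assumes "finite (UNIV :: 'a::field set)" "(a::'a) \<noteq> 0"
  shows "a ^ (card (UNIV :: 'a set) - 1) = 1"
proof -
  let ?S = "UNIV - {0::'a}"
  have "(\<Prod>x\<in>?S. a * x) = (\<Prod>x\<in>?S. x)"
    by (rule prod.reindex_bij_witness[of _ "\<lambda>x. x / a" "\<lambda>x. a * x"]) (use assms in auto)
  moreover have "(\<Prod>x\<in>?S. a * x) = a ^ (card (UNIV :: 'a set) - 1) * (\<Prod>x\<in>?S. x)"
    using assms(1) by (simp add: prod.distrib card_Diff_singleton)
  moreover have "(\<Prod>x\<in>?S. x) \<noteq> 0" using assms(1) by simp
  ultimately show ?thesis by simp
qed

lemma of_nat_fact_neq_0_mono:
  assumes "of_nat (fact n) \<noteq> (0::'a::semiring_1)" "m \<le> n"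
  shows "of_nat (fact m) \<noteq> (0::'a)"
proof
  assume "of_nat (fact m) = (0::'a)"
  then have "of_nat (fact m * (fact n div fact m)) = (0::'a)"
    by (simp only: of_nat_mult mult_zero_left)
  then show False
    using assms by (simp add: fact_dvd)
qed

lemma of_nat_neq_0_if_fact_neq_0:
  assumes "of_nat (fact n) \<noteq> (0::'a::semiring_1)" "0 < k" "k \<le> n"
  shows "of_nat k \<noteq> (0::'a)"
proof
  assume "of_nat k = (0::'a)"
  then have "of_nat (k * (fact n div k)) = (0::'a)"
    by (simp only: of_nat_mult mult_zero_left)
  then show False
    using assms by (simp add: dvd_fact)
qed

lemma dvd_if_common_roots:
  fixes f g :: "'a::field poly"
  assumes "f \<noteq> 0" "degree f \<le> card S"
    and "\<forall>a\<in>S. poly f a = 0" "\<forall>a\<in>S. poly g a = 0"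
  shows "f dvd g"
proof (rule ccontr)
  assume not_dvd: "\<not> f dvd g"
  define r where "r = g mod f"
  have "r = g - g div f * f"
    by (simp add: r_def minus_div_mult_eq_mod)
  then have "S \<subseteq> {x. poly r x = 0}"
    using assms(3,4) by auto
  moreover have "r \<noteq> 0"
    using not_dvd by (simp add: r_def mod_eq_0_iff_dvd)
  ultimately have "card S \<le> card {x. poly r x = 0}"
    by (intro card_mono poly_roots_finite)
  also have "\<dots> \<le> degree r"
    using \<open>r \<noteq> 0\<close> by (rule card_poly_roots_bound)
  moreover have "degree r < degree f"
    using assms(1) not_dvd by (simp add: r_def degree_mod_less_degree)
  ultimately show False
    using assms(2) by simp
qed

lemma pbinom_0 [simp]: "pbinom x 0 = 1"
  by (simp add: pbinom_def)

lemma pbinom_Suc_0 [simp]: "pbinom x (Suc 0) = x"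
  by (simp add: pbinom_def)

lemma pbinom_Suc:
  assumes "of_nat (fact (Suc m)) \<noteq> (0::'a::field)"
  shows "of_nat (Suc m) * pbinom (x::'a poly) (Suc m) = (x - of_nat m) * pbinom x m"
proof -
  have fact_Suc_eq: "(of_nat (fact (Suc m)) :: 'a) = of_nat (Suc m) * of_nat (fact m)"
    by (simp only: fact_Suc of_nat_id of_nat_mult)
  then have "of_nat (Suc m) \<noteq> (0::'a)" "of_nat (fact m) \<noteq> (0::'a)"
    using assms by auto
  with fact_Suc_eq have c: "(of_nat (Suc m)::'a) * inverse (of_nat (fact (Suc m))) = inverse (of_nat (fact m))"
    by (simp del: of_nat_Suc)
  have "of_nat (Suc m) * pbinom x (Suc m)
      = smult ((of_nat (Suc m)::'a) * inverse (of_nat (fact (Suc m)))) ((\<Prod>i<m. x - of_nat i) * (x - of_nat m))"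
    unfolding pbinom_def of_nat_poly by (simp add: prod.lessThan_Suc mult_ac)
  also have "\<dots> = (x - of_nat m) * pbinom x m"
    unfolding c pbinom_def by (simp add: mult_ac)
  finally show ?thesis .
qed

lemma poly_pbinom_eq_0:
  assumes "poly x a = of_nat n" "n < m"
  shows "poly (pbinom x m) (a::'a::field) = 0"
proof -
  have "(\<Prod>i<m. poly x a - of_nat i) = 0"
    using assms by (intro prod_zero) auto
  then show ?thesis
    by (simp add: pbinom_def poly_prod)
qed

text \<open>The binomial series of \<open>(1 + Y X)\<^sup>v\<close>, with coefficients \<open>Y\<^sup>k binom(v, k)\<close>.\<close>
definition binom_series :: "'a::field poly \<Rightarrow> 'a poly \<Rightarrow> 'a poly fps" where
  "binom_series Y v = Abs_fps (\<lambda>k. Y ^ k * pbinom v k)"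

lemma binom_series_ode_nth:
  fixes Y v :: "'a::field poly"
  assumes "of_nat (fact (Suc m)) \<noteq> (0::'a)"
  shows "fps_nth ((1 + fps_const Y * fps_X) * fps_deriv (binom_series Y v)
           - fps_const (Y * v) * binom_series Y v) m = 0"
proof -
  have rec: "of_nat (Suc m) * pbinom v (Suc m) = (v - of_nat m) * pbinom v m"
    by (rule pbinom_Suc[OF assms])
  show ?thesis
  proof (cases m)
    case 0
    then show ?thesis using rec by (simp add: binom_series_def algebra_simps)
  next
    case (Suc k)
    have "of_nat (Suc k) * pbinom v (Suc k) + of_nat (Suc (Suc k)) * pbinom v (Suc (Suc k))
       = v * pbinom v (Suc k)"
      using rec Suc by (simp add: algebra_simps)
    then show ?thesis
      using Suc by (simp add: binom_series_def algebra_simps flip: distrib_left)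
  qed
qed

lemma fps_mult_nth_eq_0:
  assumes "\<And>m. m \<le> N \<Longrightarrow> fps_nth F m = (0::'a::comm_ring_1)"
  shows "fps_nth (G * F) N = 0"
  using assms by (auto simp: fps_mult_nth intro!: sum.neutral)

lemma binom_series_product_ode_nth:
  fixes u v Y :: "'a::field poly"
  assumes "of_nat (fact (Suc N)) \<noteq> (0::'a)"
  defines "H \<equiv> binom_series 1 u * binom_series Y v"
  shows "fps_nth ((1 + fps_X) * (1 + fps_const Y * fps_X) * fps_deriv H
           - (fps_const (u + Y * v) + fps_const (Y * (u + v)) * fps_X) * H) N = 0"
proof -
  define A where "A = binom_series 1 u"
  define B where "B = binom_series Y v"
  define EA where "EA = (1 + fps_X) * fps_deriv A - fps_const u * A"
  define EB where "EB = (1 + fps_const Y * fps_X) * fps_deriv B - fps_const (Y * v) * B"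
  have fact_ne: "of_nat (fact (Suc m)) \<noteq> (0::'a)" if "m \<le> N" for m
    by (rule of_nat_fact_neq_0_mono[OF assms(1)]) (simp add: that)
  have "fps_nth EA m = 0" "fps_nth EB m = 0" if "m \<le> N" for m
    using binom_series_ode_nth[OF fact_ne[OF that], of 1 u] binom_series_ode_nth[OF fact_ne[OF that], of Y v]
    by (simp_all add: EA_def A_def EB_def B_def)
  moreover have "(1 + fps_X) * (1 + fps_const Y * fps_X) * fps_deriv H
          - (fps_const (u + Y * v) + fps_const (Y * (u + v)) * fps_X) * H
        = (1 + fps_const Y * fps_X) * B * EA + (1 + fps_X) * A * EB"
    unfolding H_def A_def[symmetric] B_def[symmetric] EA_def EB_def fps_deriv_mult
    by (simp add: algebra_simps flip: fps_const_add fps_const_mult)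
  ultimately show ?thesis
    by (simp add: fps_mult_nth_eq_0)
qed

lemma binom_series_product_recurrence:
  fixes u v Y :: "'a::field poly"
  assumes "of_nat (fact (M + 2)) \<noteq> (0::'a)"
  defines "h \<equiv> fps_nth (binom_series 1 u * binom_series Y v)"
  shows "of_nat (M + 2) * h (M + 2) + (1 + Y) * of_nat (M + 1) * h (M + 1) + Y * of_nat M * h M
          = (u + Y * v) * h (M + 1) + Y * (u + v) * h M"
proof -
  define H where "H = binom_series 1 u * binom_series Y v"
  have "fps_nth ((1 + fps_X) * (1 + fps_const Y * fps_X) * fps_deriv H
           - (fps_const (u + Y * v) + fps_const (Y * (u + v)) * fps_X) * H) (Suc M) = 0"
    unfolding H_def using assms by (intro binom_series_product_ode_nth) simp
  moreover have "(1 + fps_X) * (1 + fps_const Y * fps_X) * fps_deriv H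
           - (fps_const (u + Y * v) + fps_const (Y * (u + v)) * fps_X) * H
     = fps_deriv H + fps_const (1 + Y) * (fps_X * fps_deriv H) + fps_const Y * (fps_X * (fps_X * fps_deriv H))
       - fps_const (u + Y * v) * H - fps_const (Y * (u + v)) * (fps_X * H)"
    by (simp add: algebra_simps flip: fps_const_add)
  ultimately have "fps_nth (fps_deriv H) (Suc M) + (1 + Y) * fps_nth (fps_X * fps_deriv H) (Suc M)
     + Y * fps_nth (fps_X * (fps_X * fps_deriv H)) (Suc M) - (u + Y * v) * fps_nth H (Suc M)
     - (Y * (u + v)) * fps_nth (fps_X * H) (Suc M) = 0"
    by (simp only: fps_sub_nth fps_add_nth fps_mult_left_const_nth)
  then show ?thesis
    unfolding h_def H_def[symmetric] by (cases M) (simp_all add: algebra_simps)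
qed

lemma degree_binom_series_product_nth:
  fixes u v Y :: "'a::field poly"
  assumes fact_ne: "of_nat (fact N) \<noteq> (0::'a)"
    and deg_c0: "degree (u + Y * v) = 0" and deg_Y: "degree Y = 0" and deg_c1: "degree (Y * (u + v)) \<le> 1"
  defines "h \<equiv> fps_nth (binom_series 1 u * binom_series Y v)"
  shows "degree (h N) \<le> N div 2"
proof -
  have "degree (h n) \<le> n div 2 \<and> degree (h (Suc n)) \<le> Suc n div 2" if "Suc n \<le> N" for n
    using that
  proof (induction n)
    case 0
    then show ?case
      using deg_c0 by (simp add: h_def binom_series_def fps_mult_nth add.commute)
  next
    case (Suc K)
    then have IH: "degree (h K) \<le> K div 2" "degree (h (K + 1)) \<le> (K + 1) div 2"
      by simp_all
    have "of_nat (fact (K + 2)) \<noteq> (0::'a)"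
      using Suc.prems by (intro of_nat_fact_neq_0_mono[OF fact_ne]) simp
    then have rec: "smult (of_nat (K + 2)) (h (K + 2))
        = (u + Y * v - (1 + Y) * of_nat (K + 1)) * h (K + 1) + (Y * (u + v) - Y * of_nat K) * h K"
      using binom_series_product_recurrence[of K u Y v] unfolding h_def
      by (simp add: of_nat_poly algebra_simps)
    have "degree (1 + Y) = 0"
      using deg_Y degree_add_le[of 1 0 Y] by simp
    then have "degree ((1 + Y) * of_nat (K + 1)) = 0"
      using degree_mult_le[of "1 + Y" "of_nat (K + 1)"] by (simp add: of_nat_poly)
    then have "degree (u + Y * v - (1 + Y) * of_nat (K + 1)) = 0"
      using deg_c0 degree_diff_le[of "u + Y * v" 0] by simp
    moreover have "degree (Y * of_nat K) \<le> 1"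
      using deg_Y degree_mult_le[of Y "of_nat K"] by (simp add: of_nat_poly)
    then have "degree (Y * (u + v) - Y * of_nat K) \<le> 1"
      using deg_c1 degree_diff_le[of "Y * (u + v)" 1] by simp
    ultimately have "degree (smult (of_nat (K + 2)) (h (K + 2))) \<le> (K + 2) div 2"
      unfolding rec using IH
      by (intro degree_add_le order.trans[OF degree_mult_le]) auto
    moreover have "(of_nat (K + 2) :: 'a) \<noteq> 0"
      using Suc.prems by (intro of_nat_neq_0_if_fact_neq_0[OF fact_ne]) simp_all
    ultimately show ?case
      using IH by simp
  qed
  then show ?thesis
    by (cases N) (auto simp: h_def binom_series_def)
qed

lemma bpoly_1_eq_binom_series_product_nth:
  "bpoly p 1 s = fps_nth (binom_series 1 (alpha - 1)
     * binom_series [:- (1 / of_nat s):] (smult (of_nat s) alpha - 1)) (p - 1)"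
proof -
  let ?y = "- (1 / of_nat s) :: 'a"
  let ?f = "\<lambda>i. pbinom (alpha - 1) i * ([:?y:] ^ (p - 1 - i) * pbinom (smult (of_nat s) alpha - 1) (p - 1 - i))"
  have "fps_nth (binom_series 1 (alpha - 1) * binom_series [:?y:] (smult (of_nat s) alpha - 1)) (p - 1)
      = sum ?f {0..p - 1}"
    by (simp add: fps_mult_nth binom_series_def)
  also have "\<dots> = sum (\<lambda>k. ?f (p - 1 + 0 - k)) {0..p - 1}"
    by (rule sum.atLeastAtMost_rev)
  also have "\<dots> = bpoly p 1 s"
    unfolding bpoly_def
  proof (intro sum.cong refl)
    fix k assume "k \<in> {0..p - 1}"
    then have "p - Suc (p - Suc k) = k"
      by auto
    then show "?f (p - 1 + 0 - k) = smult ((- (of_nat 1 / of_nat s)) ^ k)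
        (pbinom (smult (of_nat 1) alpha - 1) (p - 1 - k) * pbinom (smult (of_nat s) alpha - 1) k)"
      by (simp add: poly_const_pow mult_ac)
  qed
  finally show ?thesis ..
qed

lemma degree_bpoly_1:
  assumes "of_nat (fact (p - 1)) \<noteq> (0::'a::field)" "of_nat s \<noteq> (0::'a)"
  shows "degree (bpoly p 1 s :: 'a poly) \<le> (p - 1) div 2"
proof -
  let ?y = "- (1 / of_nat s) :: 'a"
  have "alpha - 1 + [:?y:] * (smult (of_nat s) alpha - 1) = [:- 1 - ?y:]"
    using assms(2) by (simp add: alpha_def algebra_simps flip: pCons_one)
  then have "degree (alpha - 1 + [:?y:] * (smult (of_nat s) alpha - 1)) = 0"
    by simp
  moreover have "degree ([:?y:] * (alpha - 1 + (smult (of_nat s) alpha - 1))) \<le> 1"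
    by (simp add: alpha_def) (intro impI degree_diff_le; simp)
  ultimately show ?thesis
    unfolding bpoly_1_eq_binom_series_product_nth
    by (intro degree_binom_series_product_nth assms(1)) simp_all
qed

definition bpoly_root_indices :: "nat \<Rightarrow> nat \<Rightarrow> nat set" where
  "bpoly_root_indices p s = {j \<in> {1..p - 1}. j + s * j mod p \<le> p}"

lemma poly_bpoly_1_of_nat_eq_0:
  assumes "CHAR('a::field) = p" "prime p" "0 < s" "s < p" "j \<in> bpoly_root_indices p s"
  shows "poly (bpoly p 1 s :: 'a poly) (of_nat j) = 0"
proof -
  have j: "0 < j" "j < p" "j + s * j mod p \<le> p"
    using assms(5) by (auto simp: bpoly_root_indices_def)
  have pos: "0 < s * j mod p"
    using assms(2-4) j by (simp add: prime_dvd_mult_iff nat_dvd_not_less mod_greater_zero_iff_not_dvd)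
  have "(of_nat (s * j) :: 'a) = of_nat (s * j mod p)"
    unfolding of_nat_eq_iff_cong_CHAR assms(1) by simp
  then have roots: "poly (alpha - 1) (of_nat j :: 'a) = of_nat (j - 1)"
      "poly (smult (of_nat s) alpha - 1) (of_nat j :: 'a) = of_nat (s * j mod p - 1)"
    using j(1) pos by (simp_all add: alpha_def of_nat_diff mult.commute)
  show ?thesis
    unfolding bpoly_def poly_sum
  proof (intro sum.neutral ballI)
    fix k assume "k \<in> {0..p - 1}"
    then have "k \<le> p - 1"
      by simp
    then have "j - 1 < p - 1 - k \<or> s * j mod p - 1 < k"
      using j(1,3) pos by linarith
    then show "poly (smult ((- (of_nat 1 / of_nat s)) ^ k)
        (pbinom (smult (of_nat 1) alpha - 1) (p - 1 - k) * pbinom (smult (of_nat s) alpha - 1) k))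
        (of_nat j :: 'a) = 0"
      by (elim disjE) (simp_all add: poly_pbinom_eq_0[OF roots(1)] poly_pbinom_eq_0[OF roots(2)])
  qed
qed

lemma mod_add_mod_reflect_eq:
  fixes p s j :: nat
  assumes "prime p" "\<not> p dvd s" "0 < j" "j < p"
  shows "s * j mod p + s * (p - j) mod p = p"
proof -
  have pos: "0 < s * i mod p" if "0 < i" "i < p" for i
    using assms(1,2) that by (simp add: mod_greater_zero_iff_not_dvd prime_dvd_mult_iff nat_dvd_not_less)
  have "s * j + s * (p - j) = s * p"
    using assms(4) by (simp add: diff_mult_distrib2)
  then have "p dvd s * j mod p + s * (p - j) mod p"
    by (simp add: dvd_eq_mod_eq_0 mod_add_eq)
  moreover have "s * j mod p + s * (p - j) mod p < 2 * p"
    using prime_gt_0_nat[OF assms(1)] by (simp add: mult_2 add_less_mono)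
  moreover have "0 < s * j mod p + s * (p - j) mod p"
    using pos assms(3,4) by simp
  ultimately show ?thesis
    by (auto elim!: dvdE simp: less_2_cases_iff)
qed

lemma card_bpoly_root_indices:
  assumes "prime p" "0 < s" "s < p"
  shows "p - 1 \<le> 2 * card (bpoly_root_indices p s)"
proof -
  let ?R = "bpoly_root_indices p s"
  have "{1..p - 1} \<subseteq> ?R \<union> (\<lambda>j. p - j) ` ?R"
  proof
    fix j assume "j \<in> {1..p - 1}"
    then have j: "0 < j" "j < p"
      using prime_gt_1_nat[OF assms(1)] by auto
    show "j \<in> ?R \<union> (\<lambda>j. p - j) ` ?R"
    proof (cases "j \<in> ?R")
      case False
      have "\<not> p dvd s"
        using assms by (simp add: nat_dvd_not_less)
      then have "s * j mod p + s * (p - j) mod p = p"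
        using mod_add_mod_reflect_eq[OF assms(1) _ j] by blast
      then have "p - j \<in> ?R"
        using False j by (auto simp: bpoly_root_indices_def)
      moreover have "j = p - (p - j)"
        using j by simp
      ultimately show ?thesis
        by blast
    qed (rule UnI1)
  qed
  then have "card {1..p - 1} \<le> card (?R \<union> (\<lambda>j. p - j) ` ?R)"
    by (intro card_mono) (simp_all add: bpoly_root_indices_def)
  also have "\<dots> \<le> card ?R + card ((\<lambda>j. p - j) ` ?R)"
    by (rule card_Un_le)
  also have "\<dots> \<le> card ?R + card ?R"
    by (simp add: card_image_le bpoly_root_indices_def)
  finally show ?thesis
    by simp
qed

lemma bpoly_1_dvd_alpha_power_minus_1:
  assumes card: "card (UNIV :: 'a::field set) = p" and "prime p" "0 < s" "s < p"
    and nonzero: "bpoly p 1 s \<noteq> (0 :: 'a poly)"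
  shows "bpoly p 1 s dvd (alpha ^ (p - 1) - 1 :: 'a poly)"
proof -
  have char: "CHAR('a) = p"
    using assms(1,2) by (rule CHAR_eq_card_if_prime)
  have of_nat_eq_0_iff: "of_nat n = (0::'a) \<longleftrightarrow> p dvd n" for n
    by (simp add: of_nat_eq_0_iff_char_dvd char)
  let ?R = "bpoly_root_indices p s"
  let ?S = "of_nat ` ?R :: 'a set"
  have "inj_on (of_nat :: nat \<Rightarrow> 'a) ?R"
    by (rule inj_onI) (auto simp: of_nat_eq_iff_cong_CHAR char bpoly_root_indices_def
        intro: cong_less_modulus_unique_nat)
  then have "card ?S = card ?R"
    by (rule card_image)
  moreover have "degree (bpoly p 1 s :: 'a poly) \<le> (p - 1) div 2"
    using assms(2-4) by (intro degree_bpoly_1) (simp_all add: of_nat_eq_0_iff prime_dvd_fact_iff nat_dvd_not_less)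
  moreover have "p - 1 \<le> 2 * card ?R"
    using assms(2-4) by (rule card_bpoly_root_indices)
  ultimately have "degree (bpoly p 1 s :: 'a poly) \<le> card ?S"
    by linarith
  moreover have "\<forall>a\<in>?S. poly (bpoly p 1 s) a = 0"
    using poly_bpoly_1_of_nat_eq_0[OF char assms(2-4)] by blast
  moreover have "\<forall>a\<in>?S. poly (alpha ^ (p - 1) - 1) a = 0"
  proof
    fix a assume "a \<in> ?S"
    then have "a \<noteq> 0"
      by (auto simp: of_nat_eq_0_iff bpoly_root_indices_def nat_dvd_not_less)
    then have "a ^ (p - 1) = 1"
      using power_card_minus_one_eq_1[of a] card assms(2) by (metis card.infinite not_prime_0)
    then show "poly (alpha ^ (p - 1) - 1) a = 0"
      by (simp add: alpha_def)
  qed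
  ultimately show ?thesis
    by (rule dvd_if_common_roots[OF nonzero])
qed

lemma alpha_power_minus_1_neq_0:
  assumes "1 < p"
  shows "alpha ^ (p - 1) - 1 \<noteq> (0 :: 'a::field poly)"
proof
  assume "alpha ^ (p - 1) - 1 = (0 :: 'a poly)"
  then have "poly (alpha ^ (p - 1) - 1) 0 = (0::'a)"
    by simp
  with assms show False
    by (simp add: alpha_def power_0_left)
qed

lemma Fract_mem_loc_ring:
  assumes "1 < p" "g dvd (alpha ^ (p - 1) - 1) ^ n"
  shows "Fract f g \<in> loc_ring p"
proof -
  obtain h where h: "(alpha ^ (p - 1) - 1) ^ n = h * g"
    using assms(2) by (metis dvd_def mult.commute)
  then have "h \<noteq> 0"
    using alpha_power_minus_1_neq_0[OF assms(1)] by (metis mult_zero_left power_not_zero)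
  then have "Fract f g = Fract (h * f) ((alpha ^ (p - 1) - 1) ^ n)"
    unfolding h by (rule mult_fract_cancel[symmetric])
  then show ?thesis
    unfolding loc_ring_def by blast
qed

lemma zero_mem_loc_ring: "0 \<in> loc_ring p"
proof -
  have "(0 :: 'a::field poly fract) = Fract 0 ((alpha ^ (p - 1) - 1) ^ 0)"
    by (simp add: Zero_fract_def)
  then show ?thesis
    unfolding loc_ring_def by blast
qed

lemma loc_ring_uminus:
  assumes "x \<in> loc_ring p"
  shows "- x \<in> loc_ring p"
proof -
  obtain f n where "x = Fract f ((alpha ^ (p - 1) - 1) ^ n)"
    using assms unfolding loc_ring_def by blast
  then have "- x = Fract (- f) ((alpha ^ (p - 1) - 1) ^ n)"
    by simp
  then show ?thesis
    unfolding loc_ring_def by blast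
qed

lemma prod_emb: "(\<Prod>s\<in>S. emb (f s)) = emb (\<Prod>s\<in>S. f s)"
  by (induction S rule: infinite_finite_induct) (simp_all add: emb_def One_fract_def)

lemma coeff_Gpoly:
  "coeff (Gpoly p) i = (if i \<in> {1..p - 1}
     then - (inverse (of_nat i) / (\<Prod>s = 1..i - 1. emb (bpoly p 1 s))) else 0)"
  by (simp add: Gpoly_def coeff_sum sum.delta')

lemma Gpoly_coeff_mem_loc_ring:
  assumes card: "card (UNIV :: 'a::field set) = p" and "prime p" "0 < k" "k < p"
  shows "(inverse (of_nat k) / (\<Prod>s = 1..k - 1. emb (bpoly p 1 s)) :: 'a poly fract) \<in> loc_ring p"
proof -
  define Q where "Q = (\<Prod>s = 1..k - 1. bpoly p 1 s :: 'a poly)"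
  have coeff_eq: "(inverse (of_nat k) / (\<Prod>s = 1..k - 1. emb (bpoly p 1 s)) :: 'a poly fract)
      = Fract 1 (of_nat k * Q)"
    unfolding Q_def prod_emb by (simp add: emb_def of_nat_fract)
  show ?thesis
  proof (cases "Q = 0")
    case True
    \<comment> \<open>\<open>Fract _ 0 = 0\<close>: the coefficient is the junk value 0.\<close>
    show ?thesis
      unfolding coeff_eq True mult_zero_right eq_fract(2) Zero_fract_def[symmetric]
      by (rule zero_mem_loc_ring)
  next
    case False
    have "bpoly p 1 s dvd (alpha ^ (p - 1) - 1 :: 'a poly)" if "s \<in> {1..k - 1}" for s
      using that False assms by (intro bpoly_1_dvd_alpha_power_minus_1) (auto simp: Q_def)
    then have "Q dvd (\<Prod>s = 1..k - 1. alpha ^ (p - 1) - 1)"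
      unfolding Q_def by (rule prod_dvd_prod)
    moreover have "is_unit (of_nat k :: 'a poly)"
      using CHAR_eq_card_if_prime[OF card assms(2)] assms(3,4)
      by (simp add: of_nat_poly is_unit_const_poly_iff dvd_field_iff of_nat_eq_0_iff_char_dvd nat_dvd_not_less)
    ultimately have "of_nat k * Q dvd (alpha ^ (p - 1) - 1) ^ (k - 1)"
      by (simp add: mult_unit_dvd_iff')
    then show ?thesis
      unfolding coeff_eq using prime_gt_1_nat[OF assms(2)] by (rule Fract_mem_loc_ring[rotated])
  qed
qed

theorem theorem5:
  fixes p :: nat
  assumes "prime p" and "odd p" and "card (UNIV :: 'a::field set) = p"
  shows "\<forall>i. coeff (Gpoly p :: 'a poly fract poly) i \<in> loc_ring p"
  \<comment> \<open>The argument also works for \<open>p = 2\<close>.\<close>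
proof
  fix i
  show "coeff (Gpoly p :: 'a poly fract poly) i \<in> loc_ring p"
  proof (cases "i \<in> {1..p - 1}")
    case True
    then have "0 < i" "i < p"
      using prime_gt_1_nat[OF assms(1)] by auto
    then show ?thesis
      unfolding coeff_Gpoly if_P[OF True]
      by (intro loc_ring_uminus Gpoly_coeff_mem_loc_ring assms(1,3))
  next
    case False
    show ?thesis
      unfolding coeff_Gpoly if_not_P[OF False] by (rule zero_mem_loc_ring)
  qed
qed

end
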